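(* Let $H$ be a quasitriangular Hopf algebra over $\mathbb{C}$ with quasitriangular structure $\mathcal{R}\in H\otimes H$, and $A$ a Hopf algebra non-degenerately paired with $H$, such that $H$ is factorisable, i.e. the map $\mathcal{Q}:A\to H$, $\mathcal{Q}(a)=(a\otimes{\rm id})(\mathcal{R}_{21}\mathcal{R})$, is a linear isomorphism. Then $\mathcal{Q}$ restricts to a linear isomorphism $\ker\epsilon\subset A\to\ker\epsilon\subset H$, and it intertwines the action of the quantum double $H\bowtie A^{\rm op}$ on $\ker\epsilon\subset A$ given by \[h\triangleright a=a_{(2)}\langle h,(Sa_{(1)})a_{(3)}\rangle,\qquad b\triangleright a=\langle b,\mathcal{R}'^{(1)}\mathcal{R}^{(2)}\rangle\langle a_{(1)},\mathcal{R}'^{(2)}\rangle\langle a_{(3)},\mathcal{R}^{(1)}\rangle a_{(2)}-\langle b,\mathcal{Q}(a)\rangle1\] ($h\in H$, $b\in A$) with the action on $\ker\epsilon\subset H$ given by $h\triangleright x=h_{(1)}xSh_{(2)}$, $b\triangleright x=\langle b,x_{(1)}\rangle x_{(2)}-\langle b,x\rangle1$. In particular, the quantum double subrepresentations of $\ker\epsilon\subset H$ (quantum tangent spaces) are exactly the images under $\mathcal{Q}$ of the subrepresentations of $\ker\epsilon\subset A$ under the first action.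
   Context: Hopf pairing conventions: $\langle hg,a\rangle=\langle h,a_{(1)}\rangle\langle g,a_{(2)}\rangle$, $\langle h,ab\rangle=\langle h_{(1)},a\rangle\langle h_{(2)},b\rangle$, compatible with units, counits, antipodes; Sweedler notation. Quasitriangular: $\mathcal{R}=\mathcal{R}^{(1)}\otimes\mathcal{R}^{(2)}$ invertible with $(\Delta\otimes{\rm id})\mathcal{R}=\mathcal{R}_{13}\mathcal{R}_{23}$, $({\rm id}\otimes\Delta)\mathcal{R}=\mathcal{R}_{13}\mathcal{R}_{12}$, $\Delta^{\rm op}h=\mathcal{R}(\Delta h)\mathcal{R}^{-1}$; $\mathcal{R}'$ denotes a second copy of $\mathcal{R}$; $\mathcal{R}_{21}=\mathcal{R}^{(2)}\otimes\mathcal{R}^{(1)}$. Quantum double $H\bowtie A^{\rm op}$: $H\otimes A$ with product $(h\otimes a)(g\otimes b)=hg_{(2)}\otimes ba_{(2)}\langle g_{(1)},a_{(1)}\rangle\langle g_{(3)},Sa_{(3)}\rangle$. *)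

theory Defs
  imports Complex_Main
begin

text \<open>Elements of tensor products V (x) W (resp. V (x) W (x) U)
  are represented by finite lists of pairs (resp. triples) of simple tensors;
  two representatives denote the same tensor iff every complex-valued
  bilinear (resp. trilinear) form takes the same value on them.  Coproducts are
  functions into such representatives (Sweedler notation).\<close>

definition bilinear_form ::
  "(complex \<Rightarrow> 'v::ab_group_add \<Rightarrow> 'v) \<Rightarrow> (complex \<Rightarrow> 'w::ab_group_add \<Rightarrow> 'w) \<Rightarrow> ('v \<Rightarrow> 'w \<Rightarrow> complex) \<Rightarrow> bool" where
  "bilinear_form s1 s2 f \<longleftrightarrow>
     (\<forall>y. Vector_Spaces.linear s1 (*) (\<lambda>x. f x y)) \<and>
     (\<forall>x. Vector_Spaces.linear s2 (*) (\<lambda>y. f x y))"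

definition trilinear_form ::
  "(complex \<Rightarrow> 'v::ab_group_add \<Rightarrow> 'v) \<Rightarrow> (complex \<Rightarrow> 'w::ab_group_add \<Rightarrow> 'w) \<Rightarrow> (complex \<Rightarrow> 'u::ab_group_add \<Rightarrow> 'u)
   \<Rightarrow> ('v \<Rightarrow> 'w \<Rightarrow> 'u \<Rightarrow> complex) \<Rightarrow> bool" where
  "trilinear_form s1 s2 s3 f \<longleftrightarrow>
     (\<forall>y z. Vector_Spaces.linear s1 (*) (\<lambda>x. f x y z)) \<and>
     (\<forall>x z. Vector_Spaces.linear s2 (*) (\<lambda>y. f x y z)) \<and>
     (\<forall>x y. Vector_Spaces.linear s3 (*) (\<lambda>z. f x y z))"

definition tsum2 :: "('v \<Rightarrow> 'w \<Rightarrow> complex) \<Rightarrow> ('v \<times> 'w) list \<Rightarrow> complex" where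
  "tsum2 f xs = sum_list (map (\<lambda>(p, q). f p q) xs)"

definition tsum3 :: "('v \<Rightarrow> 'w \<Rightarrow> 'u \<Rightarrow> complex) \<Rightarrow> ('v \<times> 'w \<times> 'u) list \<Rightarrow> complex" where
  "tsum3 f xs = sum_list (map (\<lambda>(p, q, r). f p q r) xs)"

definition teq2 where
  "teq2 s1 s2 xs ys \<longleftrightarrow> (\<forall>f. bilinear_form s1 s2 f \<longrightarrow> tsum2 f xs = tsum2 f ys)"

definition teq3 where
  "teq3 s1 s2 s3 xs ys \<longleftrightarrow>
     (\<forall>f. trilinear_form s1 s2 s3 f \<longrightarrow> tsum3 f xs = tsum3 f ys)"

definition tmul :: "('h::times \<times> 'h) list \<Rightarrow> ('h \<times> 'h) list \<Rightarrow> ('h \<times> 'h) list" where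
  "tmul xs ys = [(p * r, q * t). (p, q) \<leftarrow> xs, (r, t) \<leftarrow> ys]"

definition sw3 :: "('a \<Rightarrow> ('a \<times> 'a) list) \<Rightarrow> 'a \<Rightarrow> ('a \<times> 'a \<times> 'a) list" where
  "sw3 \<Delta> a = [(p, q, r). (p, x) \<leftarrow> \<Delta> a, (q, r) \<leftarrow> \<Delta> x]"

definition hopf_algebra ::
  "(complex \<Rightarrow> 'h::ring_1 \<Rightarrow> 'h) \<Rightarrow> ('h \<Rightarrow> ('h \<times> 'h) list) \<Rightarrow> ('h \<Rightarrow> complex) \<Rightarrow> ('h \<Rightarrow> 'h) \<Rightarrow> bool" where
  "hopf_algebra s \<Delta> \<epsilon> S \<longleftrightarrow>
     vector_space s \<and>
     (\<forall>c x y. s c (x * y) = s c x * y \<and> s c (x * y) = x * s c y) \<and>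
     (\<forall>f. bilinear_form s s f \<longrightarrow> Vector_Spaces.linear s (*) (\<lambda>x. tsum2 f (\<Delta> x))) \<and>
     (\<forall>x. teq3 s s s [(p, q, x2). (x1, x2) \<leftarrow> \<Delta> x, (p, q) \<leftarrow> \<Delta> x1]
                      [(x1, p, q). (x1, x2) \<leftarrow> \<Delta> x, (p, q) \<leftarrow> \<Delta> x2]) \<and>
     (\<forall>x y. teq2 s s (\<Delta> (x * y)) (tmul (\<Delta> x) (\<Delta> y))) \<and>
     teq2 s s (\<Delta> 1) [(1, 1)] \<and>
     Vector_Spaces.linear s (*) \<epsilon> \<and>
     (\<forall>x y. \<epsilon> (x * y) = \<epsilon> x * \<epsilon> y) \<and> \<epsilon> 1 = 1 \<and>
     (\<forall>x. sum_list (map (\<lambda>(p, q). s (\<epsilon> p) q) (\<Delta> x)) = x) \<and>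
     (\<forall>x. sum_list (map (\<lambda>(p, q). s (\<epsilon> q) p) (\<Delta> x)) = x) \<and>
     Vector_Spaces.linear s s S \<and>
     (\<forall>x. sum_list (map (\<lambda>(p, q). S p * q) (\<Delta> x)) = s (\<epsilon> x) 1) \<and>
     (\<forall>x. sum_list (map (\<lambda>(p, q). p * S q) (\<Delta> x)) = s (\<epsilon> x) 1)"

definition hopf_pairing ::
  "(complex \<Rightarrow> 'h::ring_1 \<Rightarrow> 'h) \<Rightarrow> ('h \<Rightarrow> ('h \<times> 'h) list) \<Rightarrow> ('h \<Rightarrow> complex) \<Rightarrow> ('h \<Rightarrow> 'h) \<Rightarrow>
   (complex \<Rightarrow> 'a::ring_1 \<Rightarrow> 'a) \<Rightarrow> ('a \<Rightarrow> ('a \<times> 'a) list) \<Rightarrow> ('a \<Rightarrow> complex) \<Rightarrow> ('a \<Rightarrow> 'a) \<Rightarrow>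
   ('h \<Rightarrow> 'a \<Rightarrow> complex) \<Rightarrow> bool" where
  "hopf_pairing sH \<Delta>H \<epsilon>H SH sA \<Delta>A \<epsilon>A SA pair \<longleftrightarrow>
     bilinear_form sH sA pair \<and>
     (\<forall>h g a. pair (h * g) a = sum_list (map (\<lambda>(p, q). pair h p * pair g q) (\<Delta>A a))) \<and>
     (\<forall>h a b. pair h (a * b) = sum_list (map (\<lambda>(p, q). pair p a * pair q b) (\<Delta>H h))) \<and>
     (\<forall>a. pair 1 a = \<epsilon>A a) \<and> (\<forall>h. pair h 1 = \<epsilon>H h) \<and>
     (\<forall>h a. pair (SH h) a = pair h (SA a))"

definition nondegenerate_pairing :: "('h::zero \<Rightarrow> 'a::zero \<Rightarrow> complex) \<Rightarrow> bool" where
  "nondegenerate_pairing pair \<longleftrightarrow>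
     (\<forall>h. (\<forall>a. pair h a = 0) \<longrightarrow> h = 0) \<and> (\<forall>a. (\<forall>h. pair h a = 0) \<longrightarrow> a = 0)"

definition quasitriangular ::
  "(complex \<Rightarrow> 'h::ring_1 \<Rightarrow> 'h) \<Rightarrow> ('h \<Rightarrow> ('h \<times> 'h) list) \<Rightarrow> ('h \<times> 'h) list \<Rightarrow> bool" where
  "quasitriangular s \<Delta> R \<longleftrightarrow>
     (\<exists>Rinv. teq2 s s (tmul R Rinv) [(1, 1)] \<and> teq2 s s (tmul Rinv R) [(1, 1)] \<and>
        (\<forall>h. teq2 s s (map (\<lambda>(p, q). (q, p)) (\<Delta> h)) (tmul (tmul R (\<Delta> h)) Rinv))) \<and>
     teq3 s s s [(p, q, r2). (r1, r2) \<leftarrow> R, (p, q) \<leftarrow> \<Delta> r1]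
                [(r1, t1, r2 * t2). (r1, r2) \<leftarrow> R, (t1, t2) \<leftarrow> R] \<and>
     teq3 s s s [(r1, p, q). (r1, r2) \<leftarrow> R, (p, q) \<leftarrow> \<Delta> r2]
                [(r1 * t1, t2, r2). (r1, r2) \<leftarrow> R, (t1, t2) \<leftarrow> R]"

text \<open>Q(a) = (a (x) id)(R21 R), where R21 R = R'(2) R(1) (x) R'(1) R(2).\<close>
definition Qmap ::
  "(complex \<Rightarrow> 'h::ring_1 \<Rightarrow> 'h) \<Rightarrow> ('h \<Rightarrow> 'a \<Rightarrow> complex) \<Rightarrow> ('h \<times> 'h) list \<Rightarrow> 'a \<Rightarrow> 'h" where
  "Qmap sH pair R a = sum_list [sH (pair (t2 * r1) a) (t1 * r2). (t1, t2) \<leftarrow> R, (r1, r2) \<leftarrow> R]"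

definition actH_A ::
  "(complex \<Rightarrow> 'a::ring_1 \<Rightarrow> 'a) \<Rightarrow> ('a \<Rightarrow> ('a \<times> 'a) list) \<Rightarrow> ('a \<Rightarrow> 'a) \<Rightarrow>
   ('h \<Rightarrow> 'a \<Rightarrow> complex) \<Rightarrow> 'h \<Rightarrow> 'a \<Rightarrow> 'a" where
  "actH_A sA \<Delta>A SA pair h a = sum_list [sA (pair h (SA a1 * a3)) a2. (a1, a2, a3) \<leftarrow> sw3 \<Delta>A a]"

definition actA_A ::
  "(complex \<Rightarrow> 'h::ring_1 \<Rightarrow> 'h) \<Rightarrow> (complex \<Rightarrow> 'a::ring_1 \<Rightarrow> 'a) \<Rightarrow> ('a \<Rightarrow> ('a \<times> 'a) list) \<Rightarrow>
   ('h \<Rightarrow> 'a \<Rightarrow> complex) \<Rightarrow> ('h \<times> 'h) list \<Rightarrow> 'a \<Rightarrow> 'a \<Rightarrow> 'a" where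
  "actA_A sH sA \<Delta>A pair R b a =
     sum_list [sA (pair (t1 * r2) b * pair t2 a1 * pair r1 a3) a2.
                 (t1, t2) \<leftarrow> R, (r1, r2) \<leftarrow> R, (a1, a2, a3) \<leftarrow> sw3 \<Delta>A a]
     - sA (pair (Qmap sH pair R a) b) 1"

definition actH_H :: "('h::ring_1 \<Rightarrow> ('h \<times> 'h) list) \<Rightarrow> ('h \<Rightarrow> 'h) \<Rightarrow> 'h \<Rightarrow> 'h \<Rightarrow> 'h" where
  "actH_H \<Delta>H SH h x = sum_list [p * x * SH q. (p, q) \<leftarrow> \<Delta>H h]"

definition actA_H ::
  "(complex \<Rightarrow> 'h::ring_1 \<Rightarrow> 'h) \<Rightarrow> ('h \<Rightarrow> ('h \<times> 'h) list) \<Rightarrow> ('h \<Rightarrow> 'a \<Rightarrow> complex) \<Rightarrow> 'a \<Rightarrow> 'h \<Rightarrow> 'h" where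
  "actA_H sH \<Delta>H pair b x = sum_list [sH (pair p b) q. (p, q) \<leftarrow> \<Delta>H x] - sH (pair x b) 1"

text \<open>Subrepresentation of the quantum double (generated by H and A) inside ker epsilon.\<close>
definition double_subrep ::
  "(complex \<Rightarrow> 'v::ab_group_add \<Rightarrow> 'v) \<Rightarrow> ('v \<Rightarrow> complex) \<Rightarrow> ('h \<Rightarrow> 'v \<Rightarrow> 'v) \<Rightarrow> ('a \<Rightarrow> 'v \<Rightarrow> 'v) \<Rightarrow> 'v set \<Rightarrow> bool" where
  "double_subrep s \<epsilon> actH actA W \<longleftrightarrow>
     W \<subseteq> {v. \<epsilon> v = 0} \<and> module.subspace s W \<and>
     (\<forall>h v. v \<in> W \<longrightarrow> actH h v \<in> W) \<and> (\<forall>b v. v \<in> W \<longrightarrow> actA b v \<in> W)"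

end

theory Submission
  imports Defs
begin

(* Write X = R21 R.  Since Delta^op h = R (Delta h) R^-1, X commutes with every Delta h, and
   this makes Q(a) = (a (x) id) X intertwine the coadjoint action of H on A with the adjoint
   action on H.  The axioms (Delta (x) id) R = R13 R23 and (id (x) Delta) R = R13 R12 expand
   <Q(a), b c> as a sum over four copies of R, which is what the A-action on A produces after
   pairing with c.  Applying the counit to the same axioms and cancelling the invertible R
   gives (eps (x) id) R = (id (x) eps) R = 1, whence eps (Q a) = eps a and Q 1 = 1.  The
   statement on subrepresentations is then transport of structure along the linear
   bijection Q. *)

lemma vector_space_complex: "vector_space ((*) :: complex \<Rightarrow> complex \<Rightarrow> complex)"
  unfolding vector_space_def by (simp add: algebra_simps)

lemma
  assumes "Vector_Spaces.linear s1 s2 f"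
  shows linear_map_add: "f (x + y) = f x + f y"
    and linear_map_scale: "f (s1 c x) = s2 c (f x)"
    and linear_map_diff: "f (x - y) = f x - f y"
    and linear_map_sum_list: "f (sum_list xs) = sum_list (map f xs)"
proof -
  interpret Vector_Spaces.linear s1 s2 f by fact
  show "f (x + y) = f x + f y" "f (s1 c x) = s2 c (f x)" "f (x - y) = f x - f y"
    by (simp_all add: add scale diff)
  show "f (sum_list xs) = sum_list (map f xs)"
    by (induct xs) (simp_all add: add)
qed

subsection \<open>Transport of subrepresentations along a linear bijection\<close>

lemma bij_betw_kernels:
  assumes "bij f" and "\<And>v. \<epsilon>W (f v) = \<epsilon>V v"
  shows "bij_betw f {v. \<epsilon>V v = 0} {w. \<epsilon>W w = 0}"
proof (rule bij_betw_subset)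
  show "bij_betw f UNIV UNIV" using assms(1) by (simp add: bij_def bij_betw_def)
  show "f ` {v. \<epsilon>V v = 0} = {w. \<epsilon>W w = 0}"
    using assms by (auto simp: image_iff bij_def) (metis surj_f_inv_f)
qed simp

lemma double_subrep_transport:
  assumes lin: "Vector_Spaces.linear sV sW f" and "bij f"
    and \<epsilon>: "\<And>v. \<epsilon>W (f v) = \<epsilon>V v"
    and actH: "\<And>h v. \<epsilon>V v = 0 \<Longrightarrow> f (actHV h v) = actHW h (f v)"
    and actA: "\<And>b v. \<epsilon>V v = 0 \<Longrightarrow> f (actAV b v) = actAW b (f v)"
  shows "double_subrep sW \<epsilon>W actHW actAW W \<longleftrightarrow>
         (\<exists>V. double_subrep sV \<epsilon>V actHV actAV V \<and> W = f ` V)"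
proof
  assume W: "double_subrep sW \<epsilon>W actHW actAW W"
  have "double_subrep sV \<epsilon>V actHV actAV (f -` W)"
    using W module_hom.subspace_vimage[OF lin[THEN Vector_Spaces.linear.axioms(3)]]
    by (fastforce simp: double_subrep_def \<epsilon> actH actA)
  moreover have "W = f ` (f -` W)"
    using \<open>bij f\<close> by (simp add: bij_def surj_image_vimage_eq)
  ultimately show "\<exists>V. double_subrep sV \<epsilon>V actHV actAV V \<and> W = f ` V" by blast
next
  assume "\<exists>V. double_subrep sV \<epsilon>V actHV actAV V \<and> W = f ` V"
  then obtain V where V: "double_subrep sV \<epsilon>V actHV actAV V" and W: "W = f ` V" by blast
  then have ker: "\<And>v. v \<in> V \<Longrightarrow> \<epsilon>V v = 0" by (auto simp: double_subrep_def)
  show "double_subrep sW \<epsilon>W actHW actAW W"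
    unfolding double_subrep_def W
  proof (intro conjI allI impI)
    show "f ` V \<subseteq> {w. \<epsilon>W w = 0}" using ker by (auto simp: \<epsilon>)
    show "module.subspace sW (f ` V)"
      using V module_hom.subspace_image[OF lin[THEN Vector_Spaces.linear.axioms(3)]] by (simp add: double_subrep_def)
    show "actHW h w \<in> f ` V" if "w \<in> f ` V" for h w
      using that V ker by (auto simp: double_subrep_def actH[symmetric])
    show "actAW b w \<in> f ` V" if "w \<in> f ` V" for b w
      using that V ker by (auto simp: double_subrep_def actA[symmetric])
  qed
qed

subsection \<open>Sums over lists of simple tensors\<close>

lemma sum_list_map_concat: "sum_list (map f (concat xss)) = (\<Sum>xs\<leftarrow>xss. sum_list (map f xs))"
  by (induct xss) auto

lemma sum_list_nested_swap:
  "(\<Sum>x\<leftarrow>xs. \<Sum>y\<leftarrow>ys. f x y) = (\<Sum>y\<leftarrow>ys. \<Sum>x\<leftarrow>xs. (f x y :: 'c::comm_monoid_add))"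
  by (induct xs) (auto simp: sum_list_addf)

lemma sum_list_split_swap:
  "(\<Sum>(a,b)\<leftarrow>xs. \<Sum>(c,d)\<leftarrow>ys. f a b c d) = (\<Sum>(c,d)\<leftarrow>ys. \<Sum>(a,b)\<leftarrow>xs. (f a b c d :: 'c::comm_monoid_add))"
  unfolding split_def by (rule sum_list_nested_swap)

lemma sum_list_split3_split_swap:
  "(\<Sum>(a,b,c)\<leftarrow>xs. \<Sum>(d,e)\<leftarrow>ys. f a b c d e) = (\<Sum>(d,e)\<leftarrow>ys. \<Sum>(a,b,c)\<leftarrow>xs. (f a b c d e :: 'c::comm_monoid_add))"
  unfolding split_def by (rule sum_list_nested_swap)

lemma sum_list_split_const_mult [simp]:
  "(\<Sum>(a,b)\<leftarrow>xs. c * f a b) = (c::'c::semiring_0) * (\<Sum>(a,b)\<leftarrow>xs. f a b)"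
  by (induct xs) (auto simp: distrib_left)

lemma sum_list_split3_const_mult [simp]:
  "(\<Sum>(a,b,d)\<leftarrow>xs. c * f a b d) = (c::'c::semiring_0) * (\<Sum>(a,b,d)\<leftarrow>xs. f a b d)"
  by (induct xs) (auto simp: distrib_left)

lemma tmul_Nil [simp]: "tmul [] Y = []"
  unfolding tmul_def by simp

lemma tmul_Cons [simp]: "tmul (x # X) Y = map (\<lambda>(r,t). (fst x * r, snd x * t)) Y @ tmul X Y"
  unfolding tmul_def by (cases x) (simp add: split_def)

lemma tmul_append [simp]: "tmul (X @ X') Y = tmul X Y @ tmul X' Y"
  by (induct X) auto

lemma tmul_map_left:
  "tmul (map (\<lambda>(r,t). (a * r, b * t)) Y) Z =
   map (\<lambda>(r,t). (a * r, b * t)) (tmul Y (Z :: ('b::semigroup_mult \<times> 'b) list))"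
  by (induct Y) (auto simp: split_def mult.assoc)

lemma tmul_assoc: "tmul (tmul X Y) Z = tmul X (tmul Y (Z :: ('b::semigroup_mult \<times> 'b) list))"
  by (induct X) (auto simp: tmul_map_left)

lemma tmul_one_right [simp]: "tmul X [(1,1)] = (X :: ('b::monoid_mult \<times> 'b) list)"
  by (induct X) auto

definition flip :: "('b \<times> 'b) list \<Rightarrow> ('b \<times> 'b) list" where
  "flip X = map (\<lambda>(p,q). (q,p)) X"

lemma flip_flip [simp]: "flip (flip X) = X"
  unfolding flip_def by (induct X) auto

lemma flip_tmul: "flip (tmul X Y) = tmul (flip X) (flip Y)"
  unfolding flip_def by (induct X) (auto simp: split_def)

lemma sum_list_tmul:
  "(\<Sum>(x1,x2)\<leftarrow>tmul X Y. f x1 x2) = (\<Sum>(p,q)\<leftarrow>X. \<Sum>(r,t)\<leftarrow>Y. f (p * r) (q * t))"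
  by (induct X) (auto simp: split_def o_def)

lemma sum_list_flip: "(\<Sum>(x1,x2)\<leftarrow>flip X. f x1 x2) = (\<Sum>(p,q)\<leftarrow>X. f q p)"
  unfolding flip_def by (simp add: o_def split_def)

subsection \<open>Algebras over the complex numbers\<close>

locale complex_algebra =
  fixes s :: "complex \<Rightarrow> 'a::ring_1 \<Rightarrow> 'a"
  assumes vector_space: "vector_space s"
    and scale_mult_left: "\<And>c x y. s c (x * y) = s c x * y"
    and scale_mult_right: "\<And>c x y. s c (x * y) = x * s c y"
begin

sublocale vector_space s
  by (rule vector_space)

abbreviation linear_functional :: "('a \<Rightarrow> complex) \<Rightarrow> bool" where
  "linear_functional f \<equiv> Vector_Spaces.linear s (*) f"

abbreviation linear_endo :: "('a \<Rightarrow> 'a) \<Rightarrow> bool" where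
  "linear_endo f \<equiv> Vector_Spaces.linear s s f"

lemma linear_functionalI:
  "(\<And>x y. f (x + y) = f x + f y) \<Longrightarrow> (\<And>c x. f (s c x) = c * f x) \<Longrightarrow> linear_functional f"
  unfolding Vector_Spaces.linear_iff using vector_space vector_space_complex by auto

lemma linear_endoI:
  "(\<And>x y. f (x + y) = f x + f y) \<Longrightarrow> (\<And>c x. f (s c x) = s c (f x)) \<Longrightarrow> linear_endo f"
  unfolding Vector_Spaces.linear_iff using vector_space by auto

lemma linear_functional_sum_list:
  assumes "\<And>i. linear_functional (f i)"
  shows "linear_functional (\<lambda>x. \<Sum>i\<leftarrow>L. f i x)"
  by (rule linear_functionalI)
    (simp_all add: linear_map_add[OF assms] linear_map_scale[OF assms] sum_list_addf sum_list_const_mult)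

lemma linear_functional_case_prod:
  "(\<And>p q. linear_functional (\<lambda>x. f p q x)) \<Longrightarrow> linear_functional (\<lambda>x. case_prod (\<lambda>p q. f p q x) i)"
  by (cases i) auto

lemma linear_functional_const_mult: "linear_functional f \<Longrightarrow> linear_functional (\<lambda>x. c * f x)"
  by (rule linear_functionalI) (auto simp: linear_map_add linear_map_scale algebra_simps)

lemma linear_functional_mult_const: "linear_functional f \<Longrightarrow> linear_functional (\<lambda>x. f x * c)"
  by (rule linear_functionalI) (auto simp: linear_map_add linear_map_scale algebra_simps)

lemma linear_functional_compose:
  "linear_functional f \<Longrightarrow> linear_endo g \<Longrightarrow> linear_functional (\<lambda>x. f (g x))"
  by (rule linear_functionalI) (auto simp: linear_map_add linear_map_scale)

lemma linear_endo_id: "linear_endo (\<lambda>x. x)"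
  by (rule linear_endoI) auto

lemma linear_endo_mult_left: "linear_endo g \<Longrightarrow> linear_endo (\<lambda>x. y * g x)"
  by (rule linear_endoI) (auto simp: linear_map_add linear_map_scale distrib_left scale_mult_right)

lemma linear_endo_mult_right: "linear_endo g \<Longrightarrow> linear_endo (\<lambda>x. g x * y)"
  by (rule linear_endoI) (auto simp: linear_map_add linear_map_scale distrib_right scale_mult_left)

lemma linear_endo_compose: "linear_endo f \<Longrightarrow> linear_endo g \<Longrightarrow> linear_endo (\<lambda>x. f (g x))"
  by (rule linear_endoI) (auto simp: linear_map_add linear_map_scale)

lemma functional_sum_list_scale:
  "linear_functional g \<Longrightarrow> g (\<Sum>(p,q)\<leftarrow>L. s (f p q) (h p q)) = (\<Sum>(p,q)\<leftarrow>L. f p q * g (h p q))"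
  by (simp add: linear_map_sum_list o_def split_def linear_map_scale)

lemma bilinear_formI:
  "(\<And>y. linear_functional (\<lambda>x. f x y)) \<Longrightarrow> (\<And>x. linear_functional (\<lambda>y. f x y)) \<Longrightarrow>
   bilinear_form s s f"
  unfolding bilinear_form_def by blast

lemma
  assumes "bilinear_form s s f"
  shows bilinear_form_linear_left: "linear_functional (\<lambda>x. f x y)"
    and bilinear_form_linear_right: "linear_functional (\<lambda>y. f x y)"
  using assms unfolding bilinear_form_def by auto

lemma teq2_sum_eq:
  assumes "teq2 s s X Y" "\<And>y. linear_functional (\<lambda>x. f x y)" "\<And>x. linear_functional (\<lambda>y. f x y)"
  shows "(\<Sum>(p,q)\<leftarrow>X. f p q) = (\<Sum>(p,q)\<leftarrow>Y. f p q)"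
  using assms unfolding teq2_def tsum2_def bilinear_form_def by blast

lemma teq3_sum_eq:
  assumes "teq3 s s s X Y" "\<And>y z. linear_functional (\<lambda>x. f x y z)"
    "\<And>x z. linear_functional (\<lambda>y. f x y z)" "\<And>x y. linear_functional (\<lambda>z. f x y z)"
  shows "(\<Sum>(p,q,r)\<leftarrow>X. f p q r) = (\<Sum>(p,q,r)\<leftarrow>Y. f p q r)"
  using assms unfolding teq3_def tsum3_def trilinear_form_def by blast

lemmas linear_intros =
  linear_functional_sum_list linear_functional_case_prod linear_functional_const_mult
  linear_functional_mult_const linear_endo_id linear_endo_mult_left linear_endo_mult_right

lemma teq2_sym: "teq2 s s X Y \<Longrightarrow> teq2 s s Y X"
  unfolding teq2_def by simp

lemma teq2_trans: "teq2 s s X Y \<Longrightarrow> teq2 s s Y Z \<Longrightarrow> teq2 s s X Z"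
  unfolding teq2_def by simp

lemma teq2_tmul_right:
  assumes "teq2 s s X X'"
  shows "teq2 s s (tmul X Y) (tmul X' Y)"
  unfolding teq2_def tsum2_def
proof (intro allI impI)
  fix f assume "bilinear_form s s f"
  note f = linear_functional_compose[OF bilinear_form_linear_left[OF this]]
    linear_functional_compose[OF bilinear_form_linear_right[OF this]]
  show "(\<Sum>(p,q)\<leftarrow>tmul X Y. f p q) = (\<Sum>(p,q)\<leftarrow>tmul X' Y. f p q)"
    unfolding sum_list_tmul by (rule teq2_sum_eq[OF assms]) (intro linear_intros f)+
qed

lemma teq2_tmul_left:
  assumes "teq2 s s X X'"
  shows "teq2 s s (tmul Y X) (tmul Y X')"
  unfolding teq2_def tsum2_def
proof (intro allI impI)
  fix f assume "bilinear_form s s f"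
  note f = linear_functional_compose[OF bilinear_form_linear_left[OF this]]
    linear_functional_compose[OF bilinear_form_linear_right[OF this]]
  show "(\<Sum>(p,q)\<leftarrow>tmul Y X. f p q) = (\<Sum>(p,q)\<leftarrow>tmul Y X'. f p q)"
    unfolding sum_list_tmul sum_list_split_swap[where xs=Y]
    by (rule teq2_sum_eq[OF assms]) (intro linear_intros f)+
qed

lemma teq2_flip:
  assumes "teq2 s s X X'"
  shows "teq2 s s (flip X) (flip X')"
  unfolding teq2_def tsum2_def sum_list_flip
proof (intro allI impI)
  fix f assume "bilinear_form s s f"
  then show "(\<Sum>(p,q)\<leftarrow>X. f q p) = (\<Sum>(p,q)\<leftarrow>X'. f q p)"
    by (intro teq2_sum_eq[OF assms] bilinear_form_linear_left bilinear_form_linear_right)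
qed

end

subsection \<open>Hopf algebras\<close>

locale hopf =
  fixes s :: "complex \<Rightarrow> 'a::ring_1 \<Rightarrow> 'a" and \<Delta> :: "'a \<Rightarrow> ('a \<times> 'a) list"
    and \<epsilon> :: "'a \<Rightarrow> complex" and S :: "'a \<Rightarrow> 'a"
  assumes hopf_algebra: "hopf_algebra s \<Delta> \<epsilon> S"

sublocale hopf \<subseteq> complex_algebra s
  using hopf_algebra unfolding hopf_algebra_def by (intro complex_algebra.intro) blast+

context hopf
begin

lemma
  shows coassoc: "teq3 s s s [(p, q, x2). (x1, x2) \<leftarrow> \<Delta> x, (p, q) \<leftarrow> \<Delta> x1]
                          [(x1, p, q). (x1, x2) \<leftarrow> \<Delta> x, (p, q) \<leftarrow> \<Delta> x2]"
    and coproduct_mult: "teq2 s s (\<Delta> (x * y)) (tmul (\<Delta> x) (\<Delta> y))"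
    and counit_linear: "linear_functional \<epsilon>"
    and counit_mult: "\<epsilon> (x * y) = \<epsilon> x * \<epsilon> y"
    and counit_one: "\<epsilon> 1 = 1"
    and counit_left: "(\<Sum>(p,q)\<leftarrow>\<Delta> x. s (\<epsilon> p) q) = x"
    and counit_right: "(\<Sum>(p,q)\<leftarrow>\<Delta> x. s (\<epsilon> q) p) = x"
    and antipode_linear: "linear_endo S"
    and antipode_left: "(\<Sum>(p,q)\<leftarrow>\<Delta> x. S p * q) = s (\<epsilon> x) 1"
    and antipode_right: "(\<Sum>(p,q)\<leftarrow>\<Delta> x. p * S q) = s (\<epsilon> x) 1"
  using hopf_algebra unfolding hopf_algebra_def by blast+

lemma linear_functional_coproduct:
  assumes "\<And>q. linear_functional (\<lambda>p. f p q)" "\<And>p. linear_functional (\<lambda>q. f p q)"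
  shows "linear_functional (\<lambda>x. \<Sum>(p,q)\<leftarrow>\<Delta> x. f p q)"
  using hopf_algebra assms unfolding hopf_algebra_def bilinear_form_def tsum2_def by auto

lemmas hopf_linear_intros = linear_intros linear_functional_coproduct
  linear_functional_compose[OF counit_linear] linear_endo_compose[OF antipode_linear]

lemma counit_left_sum:
  assumes "linear_functional g"
  shows "(\<Sum>(p,q)\<leftarrow>\<Delta> x. \<epsilon> p * g q) = g x"
  using functional_sum_list_scale[OF assms, where L = "\<Delta> x" and f = "\<lambda>p q. \<epsilon> p" and h = "\<lambda>p q. q"]
  by (simp add: counit_left)

lemma counit_right_sum:
  assumes "linear_functional g"
  shows "(\<Sum>(p,q)\<leftarrow>\<Delta> x. \<epsilon> q * g p) = g x"
  using functional_sum_list_scale[OF assms, where L = "\<Delta> x" and f = "\<lambda>p q. \<epsilon> q" and h = "\<lambda>p q. p"]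
  by (simp add: counit_right)

lemma antipode_left_sum:
  assumes "linear_functional g"
  shows "(\<Sum>(p,q)\<leftarrow>\<Delta> x. g (S p * q)) = \<epsilon> x * g 1"
  using arg_cong[where f = g, OF antipode_left[of x]]
  by (simp add: linear_map_sum_list[OF assms] linear_map_scale[OF assms] o_def split_def)

lemma antipode_right_sum:
  assumes "linear_functional g"
  shows "(\<Sum>(p,q)\<leftarrow>\<Delta> x. g (p * S q)) = \<epsilon> x * g 1"
  using arg_cong[where f = g, OF antipode_right[of x]]
  by (simp add: linear_map_sum_list[OF assms] linear_map_scale[OF assms] o_def split_def)

lemma coassoc_sum:
  assumes "\<And>y z. linear_functional (\<lambda>x. f x y z)" "\<And>x z. linear_functional (\<lambda>y. f x y z)"
    "\<And>x y. linear_functional (\<lambda>z. f x y z)"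
  shows "(\<Sum>(x1,x2)\<leftarrow>\<Delta> x. \<Sum>(p,q)\<leftarrow>\<Delta> x1. f p q x2) = (\<Sum>(x1,x2)\<leftarrow>\<Delta> x. \<Sum>(p,q)\<leftarrow>\<Delta> x2. f x1 p q)"
  using teq3_sum_eq[OF coassoc assms] by (simp add: sum_list_map_concat o_def split_def)

lemma coproduct_mult_sum:
  assumes "\<And>y. linear_functional (\<lambda>x. f x y)" "\<And>x. linear_functional (\<lambda>y. f x y)"
  shows "(\<Sum>(p,q)\<leftarrow>\<Delta> (x * y). f p q) = (\<Sum>(p,q)\<leftarrow>\<Delta> x. \<Sum>(r,t)\<leftarrow>\<Delta> y. f (p * r) (q * t))"
  using teq2_sum_eq[OF coproduct_mult assms] by (simp add: sum_list_tmul)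

definition centralises_coproduct :: "('a \<times> 'a) list \<Rightarrow> bool" where
  "centralises_coproduct X \<longleftrightarrow> (\<forall>h. teq2 s s (tmul X (\<Delta> h)) (tmul (\<Delta> h) X))"

lemma centralises_coproduct_sum:
  assumes "centralises_coproduct X" and "bilinear_form s s f"
  shows "(\<Sum>(p,q)\<leftarrow>\<Delta> h. \<Sum>(x1,x2)\<leftarrow>X. f (p * x1) (q * x2)) =
         (\<Sum>(p,q)\<leftarrow>\<Delta> h. \<Sum>(x1,x2)\<leftarrow>X. f (x1 * p) (x2 * q))"
proof -
  note f = linear_functional_compose[OF bilinear_form_linear_left[OF assms(2)]]
    linear_functional_compose[OF bilinear_form_linear_right[OF assms(2)]]
  have "(\<Sum>(x,y)\<leftarrow>tmul X (\<Delta> h). f x y) = (\<Sum>(x,y)\<leftarrow>tmul (\<Delta> h) X. f x y)"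
    using assms(1) unfolding centralises_coproduct_def
    by (intro teq2_sum_eq bilinear_form_linear_left bilinear_form_linear_right assms(2)) blast
  then show ?thesis
    unfolding sum_list_tmul by (simp add: sum_list_split_swap[where xs=X])
qed

text \<open>Moving a factor y through an element X that centralises the coproduct: in
  H (x) H this is the identity (1 (x) y) X = (S y1 (x) 1) X (y2 (x) y3).\<close>

lemma centralises_coproduct_shift:
  assumes X: "centralises_coproduct X" and M: "bilinear_form s s M"
  shows "(\<Sum>(x1,x2)\<leftarrow>X. M x1 (y * x2)) =
         (\<Sum>(p,q)\<leftarrow>\<Delta> y. \<Sum>(p1,p2)\<leftarrow>\<Delta> p. \<Sum>(x1,x2)\<leftarrow>X. M (S p1 * (x1 * p2)) (x2 * q))"
proof -
  note rules = hopf_linear_intros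
    linear_functional_compose[OF bilinear_form_linear_left[OF M]]
    linear_functional_compose[OF bilinear_form_linear_right[OF M]]
  have "(\<Sum>(x1,x2)\<leftarrow>X. M x1 (y * x2)) = (\<Sum>(p,q)\<leftarrow>\<Delta> y. \<epsilon> p * (\<Sum>(x1,x2)\<leftarrow>X. M x1 (q * x2)))"
    by (rule counit_left_sum[symmetric]) (intro rules)
  also have "\<dots> = (\<Sum>(p,q)\<leftarrow>\<Delta> y. \<Sum>(p1,p2)\<leftarrow>\<Delta> p. \<Sum>(x1,x2)\<leftarrow>X. M (S p1 * p2 * x1) (q * x2))"
  proof -
    have "\<epsilon> p * (\<Sum>(x1,x2)\<leftarrow>X. M (1 * x1) (q * x2)) =
          (\<Sum>(p1,p2)\<leftarrow>\<Delta> p. \<Sum>(x1,x2)\<leftarrow>X. M (S p1 * p2 * x1) (q * x2))" for p q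
      by (rule antipode_left_sum[symmetric]) (intro rules)
    then show ?thesis by simp
  qed
  also have "\<dots> = (\<Sum>(p,q)\<leftarrow>\<Delta> y. \<Sum>(q1,q2)\<leftarrow>\<Delta> q. \<Sum>(x1,x2)\<leftarrow>X. M (S p * (q1 * x1)) (q2 * x2))"
    using coassoc_sum[where f = "\<lambda>u v w. \<Sum>(x1,x2)\<leftarrow>X. M (S u * v * x1) (w * x2)"]
    by (simp add: mult.assoc rules)
  also have "\<dots> = (\<Sum>(p,q)\<leftarrow>\<Delta> y. \<Sum>(q1,q2)\<leftarrow>\<Delta> q. \<Sum>(x1,x2)\<leftarrow>X. M (S p * (x1 * q1)) (x2 * q2))"
  proof -
    have "bilinear_form s s (\<lambda>u v. M (S p * u) v)" for p
      by (intro bilinear_formI rules)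
    from centralises_coproduct_sum[OF X this] show ?thesis by simp
  qed
  also have "\<dots> = (\<Sum>(p,q)\<leftarrow>\<Delta> y. \<Sum>(p1,p2)\<leftarrow>\<Delta> p. \<Sum>(x1,x2)\<leftarrow>X. M (S p1 * (x1 * p2)) (x2 * q))"
    by (rule coassoc_sum[symmetric]) (intro rules)+
  finally show ?thesis .
qed

lemma centralises_coproduct_conjugation:
  assumes X: "centralises_coproduct X" and M: "bilinear_form s s M"
  shows "(\<Sum>(h1,h2)\<leftarrow>\<Delta> h. \<Sum>(x1,x2)\<leftarrow>X. M x1 (h1 * x2 * S h2)) =
         (\<Sum>(h1,h2)\<leftarrow>\<Delta> h. \<Sum>(x1,x2)\<leftarrow>X. M (S h1 * (x1 * h2)) x2)"
proof -
  note rules = hopf_linear_intros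
    linear_functional_compose[OF bilinear_form_linear_left[OF M]]
    linear_functional_compose[OF bilinear_form_linear_right[OF M]]
  have "(\<Sum>(x1,x2)\<leftarrow>X. M x1 (h1 * x2 * S h2)) =
        (\<Sum>(p,q)\<leftarrow>\<Delta> h1. \<Sum>(p1,p2)\<leftarrow>\<Delta> p. \<Sum>(x1,x2)\<leftarrow>X. M (S p1 * (x1 * p2)) (x2 * q * S h2))"
    for h1 h2
  proof -
    have "bilinear_form s s (\<lambda>u v. M u (v * S h2))"
      by (intro bilinear_formI rules)
    from centralises_coproduct_shift[OF X this, of h1] show ?thesis by (simp add: mult.assoc)
  qed
  then have "(\<Sum>(h1,h2)\<leftarrow>\<Delta> h. \<Sum>(x1,x2)\<leftarrow>X. M x1 (h1 * x2 * S h2)) =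
      (\<Sum>(h1,h2)\<leftarrow>\<Delta> h. \<Sum>(p,q)\<leftarrow>\<Delta> h1. \<Sum>(p1,p2)\<leftarrow>\<Delta> p. \<Sum>(x1,x2)\<leftarrow>X. M (S p1 * (x1 * p2)) (x2 * q * S h2))"
    by simp
  also have "\<dots> = (\<Sum>(h1,h2)\<leftarrow>\<Delta> h. \<Sum>(p,q)\<leftarrow>\<Delta> h2. \<Sum>(p1,p2)\<leftarrow>\<Delta> h1. \<Sum>(x1,x2)\<leftarrow>X. M (S p1 * (x1 * p2)) (x2 * (p * S q)))"
    using coassoc_sum[where f = "\<lambda>u w z. \<Sum>(p1,p2)\<leftarrow>\<Delta> u. \<Sum>(x1,x2)\<leftarrow>X. M (S p1 * (x1 * p2)) (x2 * w * S z)"]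
    by (simp add: mult.assoc rules)
  also have "\<dots> = (\<Sum>(h1,h2)\<leftarrow>\<Delta> h. \<epsilon> h2 * (\<Sum>(p1,p2)\<leftarrow>\<Delta> h1. \<Sum>(x1,x2)\<leftarrow>X. M (S p1 * (x1 * p2)) x2))"
  proof -
    have "(\<Sum>(p,q)\<leftarrow>\<Delta> h2. \<Sum>(p1,p2)\<leftarrow>\<Delta> h1. \<Sum>(x1,x2)\<leftarrow>X. M (S p1 * (x1 * p2)) (x2 * (p * S q))) =
          \<epsilon> h2 * (\<Sum>(p1,p2)\<leftarrow>\<Delta> h1. \<Sum>(x1,x2)\<leftarrow>X. M (S p1 * (x1 * p2)) (x2 * 1))" for h1 h2
      by (rule antipode_right_sum) (intro rules)
    then show ?thesis by simp
  qed
  also have "\<dots> = (\<Sum>(h1,h2)\<leftarrow>\<Delta> h. \<Sum>(x1,x2)\<leftarrow>X. M (S h1 * (x1 * h2)) x2)"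
    by (simp add: counit_right_sum rules)
  finally show ?thesis .
qed

end

subsection \<open>A quasitriangular Hopf algebra paired with a Hopf algebra\<close>

locale paired_quasitriangular =
  H: hopf sH \<Delta>H \<epsilon>H SH + A: hopf sA \<Delta>A \<epsilon>A SA
  for sH :: "complex \<Rightarrow> 'h::ring_1 \<Rightarrow> 'h" and \<Delta>H \<epsilon>H SH
    and sA :: "complex \<Rightarrow> 'a::ring_1 \<Rightarrow> 'a" and \<Delta>A \<epsilon>A SA +
  fixes P :: "'h \<Rightarrow> 'a \<Rightarrow> complex" and R :: "('h \<times> 'h) list"
  assumes pairing: "hopf_pairing sH \<Delta>H \<epsilon>H SH sA \<Delta>A \<epsilon>A SA P"
    and nondegenerate: "nondegenerate_pairing P"
    and quasitriangular: "quasitriangular sH \<Delta>H R"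
begin

lemma
  shows pairing_linear_left: "H.linear_functional (\<lambda>h. P h a)"
    and pairing_linear_right: "A.linear_functional (\<lambda>a. P h a)"
    and pairing_mult_left: "P (h * g) a = (\<Sum>(p,q)\<leftarrow>\<Delta>A a. P h p * P g q)"
    and pairing_mult_right: "P h (a * b) = (\<Sum>(p,q)\<leftarrow>\<Delta>H h. P p a * P q b)"
    and pairing_one_left: "P 1 a = \<epsilon>A a"
    and pairing_one_right: "P h 1 = \<epsilon>H h"
    and pairing_antipode: "P (SH h) a = P h (SA a)"
  using pairing unfolding hopf_pairing_def bilinear_form_def by blast+

lemmas paired_linear_intros = H.hopf_linear_intros A.hopf_linear_intros
  H.linear_functional_compose[OF pairing_linear_left]
  A.linear_functional_compose[OF pairing_linear_right]

lemma H_eq_by_pairing: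
  assumes "\<And>a. P x a = P y a"
  shows "x = y"
proof -
  have "P (x - y) a = 0" for a
    using assms by (simp add: linear_map_diff[OF pairing_linear_left])
  then have "x - y = 0" using nondegenerate unfolding nondegenerate_pairing_def by blast
  then show ?thesis by simp
qed

lemma pairing_mult3:
  "(\<Sum>(a1,a2,a3)\<leftarrow>sw3 \<Delta>A a. P x a1 * P y a2 * P z a3) = P (x * (y * z)) a"
  unfolding sw3_def pairing_mult_left
  by (simp add: sum_list_map_concat o_def split_def mult.assoc sum_list_const_mult)

lemma pairing_coadjoint:
  "(\<Sum>(a1,a2,a3)\<leftarrow>sw3 \<Delta>A a. P h (SA a1 * a3) * P y a2) =
   (\<Sum>(h1,h2)\<leftarrow>\<Delta>H h. P (SH h1 * (y * h2)) a)"
proof -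
  have "(\<Sum>(h1,h2)\<leftarrow>\<Delta>H h. P (SH h1 * (y * h2)) a) =
        (\<Sum>(h1,h2)\<leftarrow>\<Delta>H h. \<Sum>(a1,a')\<leftarrow>\<Delta>A a. \<Sum>(u,v)\<leftarrow>\<Delta>A a'. P y u * (P h1 (SA a1) * P h2 v))"
    unfolding pairing_mult_left pairing_antipode
    by (simp only: sum_list_split_const_mult[symmetric]) (simp only: mult_ac)
  also have "\<dots> = (\<Sum>(a1,a')\<leftarrow>\<Delta>A a. \<Sum>(u,v)\<leftarrow>\<Delta>A a'. \<Sum>(h1,h2)\<leftarrow>\<Delta>H h. P y u * (P h1 (SA a1) * P h2 v))"
    by (subst sum_list_split_swap, subst sum_list_split_swap, rule refl)
  also have "\<dots> = (\<Sum>(a1,a2,a3)\<leftarrow>sw3 \<Delta>A a. P h (SA a1 * a3) * P y a2)"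
    unfolding sw3_def pairing_mult_right
    by (simp add: sum_list_map_concat o_def split_def sum_list_const_mult mult_ac)
  finally show ?thesis ..
qed

lemma R_inverse:
  obtains Rinv where "teq2 sH sH (tmul R Rinv) [(1, 1)]" and "teq2 sH sH (tmul Rinv R) [(1, 1)]"
    and "\<And>h. teq2 sH sH (flip (\<Delta>H h)) (tmul (tmul R (\<Delta>H h)) Rinv)"
  using quasitriangular unfolding quasitriangular_def flip_def by blast

lemma R_coproduct_left_sum:
  assumes "\<And>y z. H.linear_functional (\<lambda>x. f x y z)" "\<And>x z. H.linear_functional (\<lambda>y. f x y z)"
    "\<And>x y. H.linear_functional (\<lambda>z. f x y z)"
  shows "(\<Sum>(r1,r2)\<leftarrow>R. \<Sum>(p,q)\<leftarrow>\<Delta>H r1. f p q r2) = (\<Sum>(r1,r2)\<leftarrow>R. \<Sum>(t1,t2)\<leftarrow>R. f r1 t1 (r2 * t2))"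
  using H.teq3_sum_eq[OF _ assms, of "[(p, q, r2). (r1, r2) \<leftarrow> R, (p, q) \<leftarrow> \<Delta>H r1]"
      "[(r1, t1, r2 * t2). (r1, r2) \<leftarrow> R, (t1, t2) \<leftarrow> R]"] quasitriangular
  unfolding quasitriangular_def by (simp add: sum_list_map_concat o_def split_def)

lemma R_coproduct_right_sum:
  assumes "\<And>y z. H.linear_functional (\<lambda>x. f x y z)" "\<And>x z. H.linear_functional (\<lambda>y. f x y z)"
    "\<And>x y. H.linear_functional (\<lambda>z. f x y z)"
  shows "(\<Sum>(r1,r2)\<leftarrow>R. \<Sum>(p,q)\<leftarrow>\<Delta>H r2. f r1 p q) = (\<Sum>(r1,r2)\<leftarrow>R. \<Sum>(t1,t2)\<leftarrow>R. f (r1 * t1) t2 r2)"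
  using H.teq3_sum_eq[OF _ assms, of "[(r1, p, q). (r1, r2) \<leftarrow> R, (p, q) \<leftarrow> \<Delta>H r2]"
      "[(r1 * t1, t2, r2). (r1, r2) \<leftarrow> R, (t1, t2) \<leftarrow> R]"] quasitriangular
  unfolding quasitriangular_def by (simp add: sum_list_map_concat o_def split_def)

lemma R_cancel_right:
  assumes "teq2 sH sH (tmul X R) (tmul Y R)"
  shows "teq2 sH sH X Y"
proof -
  obtain Rinv where inv: "teq2 sH sH (tmul R Rinv) [(1, 1)]" using R_inverse by blast
  have "teq2 sH sH (tmul X (tmul R Rinv)) (tmul Y (tmul R Rinv))"
    using H.teq2_tmul_right[OF assms, of Rinv] by (simp add: tmul_assoc)
  moreover have "teq2 sH sH (tmul Z (tmul R Rinv)) Z" for Z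
    using H.teq2_tmul_left[OF inv, of Z] by simp
  ultimately show ?thesis by (meson H.teq2_sym H.teq2_trans)
qed

lemma
  assumes "teq2 sH sH [(1, 1)] [(x, y)]"
  shows simple_tensor_eq_one_left: "sH (\<epsilon>H y) x = 1"
    and simple_tensor_eq_one_right: "sH (\<epsilon>H x) y = 1"
proof -
  have "P 1 c = P (sH (\<epsilon>H y) x) c" for c
    using H.teq2_sum_eq[OF assms, of "\<lambda>p q. \<epsilon>H q * P p c"]
    by (simp add: H.counit_one linear_map_scale[OF pairing_linear_left] paired_linear_intros)
  then show "sH (\<epsilon>H y) x = 1" by (metis H_eq_by_pairing)
  have "P 1 c = P (sH (\<epsilon>H x) y) c" for c
    using H.teq2_sum_eq[OF assms, of "\<lambda>p q. \<epsilon>H p * P q c"]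
    by (simp add: H.counit_one linear_map_scale[OF pairing_linear_left] paired_linear_intros)
  then show "sH (\<epsilon>H x) y = 1" by (metis H_eq_by_pairing)
qed

text \<open>Applying the counit to the quasitriangularity axioms gives R = (1 (x) psi) R and
  R = (phi (x) 1) R; cancelling R shows psi = phi = 1.\<close>

lemma R_counit_left: "(\<Sum>(r1,r2)\<leftarrow>R. sH (\<epsilon>H r1) r2) = 1"
proof -
  define \<psi> where "\<psi> = (\<Sum>(r1,r2)\<leftarrow>R. sH (\<epsilon>H r1) r2)"
  have "teq2 sH sH (tmul [(1, 1)] R) (tmul [(1, \<psi>)] R)"
    unfolding teq2_def tsum2_def
  proof (intro allI impI)
    fix G assume G: "bilinear_form sH sH G"
    note rules = paired_linear_intros H.linear_functional_compose[OF H.bilinear_form_linear_left[OF G]]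
      H.linear_functional_compose[OF H.bilinear_form_linear_right[OF G]]
    have "(\<Sum>(r1,r2)\<leftarrow>R. G r1 r2) = (\<Sum>(r1,r2)\<leftarrow>R. \<Sum>(p,q)\<leftarrow>\<Delta>H r1. \<epsilon>H p * G q r2)"
      by (simp add: H.counit_left_sum H.bilinear_form_linear_left[OF G])
    also have "\<dots> = (\<Sum>(r1,r2)\<leftarrow>R. \<Sum>(t1,t2)\<leftarrow>R. \<epsilon>H r1 * G t1 (r2 * t2))"
      by (rule R_coproduct_left_sum) (intro rules)+
    also have "\<dots> = (\<Sum>(t1,t2)\<leftarrow>R. \<Sum>(r1,r2)\<leftarrow>R. \<epsilon>H r1 * G t1 (r2 * t2))"
      by (rule sum_list_split_swap)
    also have "\<dots> = (\<Sum>(t1,t2)\<leftarrow>R. G t1 (\<psi> * t2))"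
    proof -
      have "G t1 (\<psi> * t2) = (\<Sum>(r1,r2)\<leftarrow>R. \<epsilon>H r1 * G t1 (r2 * t2))" for t1 t2
        unfolding \<psi>_def by (rule H.functional_sum_list_scale) (intro rules)
      then show ?thesis by simp
    qed
    finally show "(\<Sum>(p,q)\<leftarrow>tmul [(1, 1)] R. G p q) = (\<Sum>(p,q)\<leftarrow>tmul [(1, \<psi>)] R. G p q)"
      by (simp add: sum_list_tmul o_def split_def)
  qed
  then have "teq2 sH sH [(1, 1)] [(1, \<psi>)]" by (rule R_cancel_right)
  from simple_tensor_eq_one_right[OF this] show ?thesis
    by (simp add: \<psi>_def H.counit_one)
qed

lemma R_counit_right: "(\<Sum>(r1,r2)\<leftarrow>R. sH (\<epsilon>H r2) r1) = 1"
proof -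
  define \<phi> where "\<phi> = (\<Sum>(r1,r2)\<leftarrow>R. sH (\<epsilon>H r2) r1)"
  have "teq2 sH sH (tmul [(1, 1)] R) (tmul [(\<phi>, 1)] R)"
    unfolding teq2_def tsum2_def
  proof (intro allI impI)
    fix G assume G: "bilinear_form sH sH G"
    note rules = paired_linear_intros H.linear_functional_compose[OF H.bilinear_form_linear_left[OF G]]
      H.linear_functional_compose[OF H.bilinear_form_linear_right[OF G]]
    have "(\<Sum>(r1,r2)\<leftarrow>R. G r1 r2) = (\<Sum>(r1,r2)\<leftarrow>R. \<Sum>(p,q)\<leftarrow>\<Delta>H r2. \<epsilon>H q * G r1 p)"
      by (simp add: H.counit_right_sum H.bilinear_form_linear_right[OF G])
    also have "\<dots> = (\<Sum>(r1,r2)\<leftarrow>R. \<Sum>(t1,t2)\<leftarrow>R. \<epsilon>H r2 * G (r1 * t1) t2)"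
      by (rule R_coproduct_right_sum) (intro rules)+
    also have "\<dots> = (\<Sum>(t1,t2)\<leftarrow>R. \<Sum>(r1,r2)\<leftarrow>R. \<epsilon>H r2 * G (r1 * t1) t2)"
      by (rule sum_list_split_swap)
    also have "\<dots> = (\<Sum>(t1,t2)\<leftarrow>R. G (\<phi> * t1) t2)"
    proof -
      have "G (\<phi> * t1) t2 = (\<Sum>(r1,r2)\<leftarrow>R. \<epsilon>H r2 * G (r1 * t1) t2)" for t1 t2
        unfolding \<phi>_def by (rule H.functional_sum_list_scale) (intro rules)
      then show ?thesis by simp
    qed
    finally show "(\<Sum>(p,q)\<leftarrow>tmul [(1, 1)] R. G p q) = (\<Sum>(p,q)\<leftarrow>tmul [(\<phi>, 1)] R. G p q)"
      by (simp add: sum_list_tmul o_def split_def)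
  qed
  then have "teq2 sH sH [(1, 1)] [(\<phi>, 1)]" by (rule R_cancel_right)
  from simple_tensor_eq_one_left[OF this] show ?thesis
    by (simp add: \<phi>_def H.counit_one)
qed

lemma sum_R_counit_left:
  assumes "H.linear_functional g"
  shows "(\<Sum>(r1,r2)\<leftarrow>R. \<epsilon>H r1 * g r2) = g 1"
  using H.functional_sum_list_scale[OF assms, where L = R and f = "\<lambda>p q. \<epsilon>H p" and h = "\<lambda>p q. q"]
  by (simp add: R_counit_left)

lemma sum_R_counit_right:
  assumes "H.linear_functional g"
  shows "(\<Sum>(r1,r2)\<leftarrow>R. \<epsilon>H r2 * g r1) = g 1"
  using H.functional_sum_list_scale[OF assms, where L = R and f = "\<lambda>p q. \<epsilon>H q" and h = "\<lambda>p q. p"]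
  by (simp add: R_counit_right)

lemma R_coproduct_commute: "teq2 sH sH (tmul (flip (\<Delta>H h)) R) (tmul R (\<Delta>H h))"
proof -
  obtain Rinv where inv: "teq2 sH sH (tmul Rinv R) [(1, 1)]"
    and conj: "teq2 sH sH (flip (\<Delta>H h)) (tmul (tmul R (\<Delta>H h)) Rinv)"
    using R_inverse by metis
  have "teq2 sH sH (tmul (flip (\<Delta>H h)) R) (tmul (tmul R (\<Delta>H h)) (tmul Rinv R))"
    using H.teq2_tmul_right[OF conj, of R] by (simp add: tmul_assoc)
  moreover have "teq2 sH sH (tmul (tmul R (\<Delta>H h)) (tmul Rinv R)) (tmul R (\<Delta>H h))"
    using H.teq2_tmul_left[OF inv, of "tmul R (\<Delta>H h)"] by simp
  ultimately show ?thesis by (rule H.teq2_trans)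
qed

lemma R21R_centralises_coproduct: "H.centralises_coproduct (tmul (flip R) R)"
  unfolding H.centralises_coproduct_def
proof
  fix h
  have "teq2 sH sH (tmul (flip R) (tmul R (\<Delta>H h))) (tmul (flip R) (tmul (flip (\<Delta>H h)) R))"
    by (rule H.teq2_tmul_left[OF H.teq2_sym[OF R_coproduct_commute]])
  moreover have "teq2 sH sH (tmul (flip R) (flip (\<Delta>H h))) (tmul (\<Delta>H h) (flip R))"
    using H.teq2_flip[OF R_coproduct_commute[of h]] by (simp add: flip_tmul H.teq2_sym)
  then have "teq2 sH sH (tmul (tmul (flip R) (flip (\<Delta>H h))) R) (tmul (tmul (\<Delta>H h) (flip R)) R)"
    by (rule H.teq2_tmul_right)
  ultimately show "teq2 sH sH (tmul (tmul (flip R) R) (\<Delta>H h)) (tmul (\<Delta>H h) (tmul (flip R) R))"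
    by (metis H.teq2_trans tmul_assoc)
qed

abbreviation Q :: "'a \<Rightarrow> 'h" where
  "Q \<equiv> Qmap sH P R"

lemma functional_Q:
  assumes "H.linear_functional g"
  shows "g (Q a) = (\<Sum>(t1,t2)\<leftarrow>R. \<Sum>(r1,r2)\<leftarrow>R. P (t2 * r1) a * g (t1 * r2))"
  unfolding Qmap_def
  by (simp add: linear_map_sum_list[OF assms] linear_map_scale[OF assms] sum_list_map_concat
      o_def split_def)

lemmas pairing_Q = functional_Q[OF pairing_linear_left]

lemma counit_Q: "\<epsilon>H (Q a) = \<epsilon>A a"
proof -
  have "(\<Sum>(r1,r2)\<leftarrow>R. P (t2 * r1) a * \<epsilon>H (t1 * r2)) = \<epsilon>H t1 * P t2 a" for t1 t2
  proof -
    have "(\<Sum>(r1,r2)\<leftarrow>R. P (t2 * r1) a * \<epsilon>H (t1 * r2)) =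
          \<epsilon>H t1 * (\<Sum>(r1,r2)\<leftarrow>R. \<epsilon>H r2 * P (t2 * r1) a)"
      by (simp only: sum_list_split_const_mult[symmetric] H.counit_mult mult_ac)
    also have "\<dots> = \<epsilon>H t1 * P t2 a"
      by (subst sum_R_counit_right) (intro paired_linear_intros, simp)
    finally show ?thesis .
  qed
  then have "\<epsilon>H (Q a) = (\<Sum>(t1,t2)\<leftarrow>R. \<epsilon>H t1 * P t2 a)"
    by (simp add: functional_Q[OF H.counit_linear])
  also have "\<dots> = \<epsilon>A a"
    by (subst sum_R_counit_left) (intro paired_linear_intros, simp add: pairing_one_left)
  finally show ?thesis .
qed

lemma Q_one: "Q 1 = 1"
proof (rule H_eq_by_pairing)
  fix c
  have "(\<Sum>(r1,r2)\<leftarrow>R. P (t2 * r1) 1 * P (t1 * r2) c) = \<epsilon>H t2 * P t1 c" for t1 t2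
  proof -
    have "(\<Sum>(r1,r2)\<leftarrow>R. P (t2 * r1) 1 * P (t1 * r2) c) =
          \<epsilon>H t2 * (\<Sum>(r1,r2)\<leftarrow>R. \<epsilon>H r1 * P (t1 * r2) c)"
      by (simp only: sum_list_split_const_mult[symmetric] pairing_one_right H.counit_mult mult_ac)
    also have "\<dots> = \<epsilon>H t2 * P t1 c"
      by (subst sum_R_counit_left) (intro paired_linear_intros, simp)
    finally show ?thesis .
  qed
  then have "P (Q 1) c = (\<Sum>(t1,t2)\<leftarrow>R. \<epsilon>H t2 * P t1 c)"
    by (simp add: pairing_Q)
  also have "\<dots> = P 1 c"
    by (subst sum_R_counit_right) (intro paired_linear_intros, simp)
  finally show "P (Q 1) c = P 1 c" .
qed

lemma linear_functional_pairing_Q: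
  assumes "Vector_Spaces.linear sA sH Q"
  shows "A.linear_functional (\<lambda>a. P (Q a) c)"
  using Vector_Spaces.linear_compose[OF assms pairing_linear_left] unfolding o_def .

lemma pairing_Q_mult_expansion:
  "P (Q a) (b * c) = (\<Sum>(t1,t2)\<leftarrow>R. \<Sum>(u1,u2)\<leftarrow>R. \<Sum>(r1,r2)\<leftarrow>R. \<Sum>(s1,s2)\<leftarrow>R.
     P (t2 * u2 * (r1 * s1)) a * (P (t1 * s2) b * P (u1 * r2) c))"
proof -
  have "P (Q a) (b * c) = (\<Sum>(t1,t2)\<leftarrow>R. \<Sum>(r1,r2)\<leftarrow>R. P (t2 * r1) a *
          (\<Sum>(p,q)\<leftarrow>\<Delta>H t1. \<Sum>(p',q')\<leftarrow>\<Delta>H r2. P (p * p') b * P (q * q') c))"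
  proof -
    have "(\<Sum>(p,q)\<leftarrow>\<Delta>H (x * y). P p b * P q c) =
          (\<Sum>(p,q)\<leftarrow>\<Delta>H x. \<Sum>(p',q')\<leftarrow>\<Delta>H y. P (p * p') b * P (q * q') c)" for x y
      by (rule H.coproduct_mult_sum) (intro paired_linear_intros)+
    then show ?thesis unfolding pairing_Q unfolding pairing_mult_right by simp
  qed
  also have "\<dots> = (\<Sum>(t1,t2)\<leftarrow>R. \<Sum>(p,q)\<leftarrow>\<Delta>H t1. \<Sum>(r1,r2)\<leftarrow>R. \<Sum>(p',q')\<leftarrow>\<Delta>H r2.
                     P (t2 * r1) a * (P (p * p') b * P (q * q') c))"
  proof -
    have "(\<Sum>(r1,r2)\<leftarrow>R. P (t2 * r1) a * (\<Sum>(p,q)\<leftarrow>\<Delta>H t1. \<Sum>(p',q')\<leftarrow>\<Delta>H r2. P (p * p') b * P (q * q') c)) =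
          (\<Sum>(p,q)\<leftarrow>\<Delta>H t1. \<Sum>(r1,r2)\<leftarrow>R. \<Sum>(p',q')\<leftarrow>\<Delta>H r2. P (t2 * r1) a * (P (p * p') b * P (q * q') c))"
      for t1 t2
      by (simp only: sum_list_split_const_mult[symmetric]) (rule sum_list_split_swap)
    then show ?thesis by simp
  qed
  also have "\<dots> = (\<Sum>(t1,t2)\<leftarrow>R. \<Sum>(u1,u2)\<leftarrow>R. \<Sum>(r1,r2)\<leftarrow>R. \<Sum>(p',q')\<leftarrow>\<Delta>H r2.
                     P (t2 * u2 * r1) a * (P (t1 * p') b * P (u1 * q') c))"
    by (rule R_coproduct_left_sum[where f = "\<lambda>p q z. \<Sum>(r1,r2)\<leftarrow>R. \<Sum>(p',q')\<leftarrow>\<Delta>H r2.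
          P (z * r1) a * (P (p * p') b * P (q * q') c)"])
      (intro paired_linear_intros)+
  also have "\<dots> = (\<Sum>(t1,t2)\<leftarrow>R. \<Sum>(u1,u2)\<leftarrow>R. \<Sum>(r1,r2)\<leftarrow>R. \<Sum>(s1,s2)\<leftarrow>R.
                     P (t2 * u2 * (r1 * s1)) a * (P (t1 * s2) b * P (u1 * r2) c))"
  proof -
    have "(\<Sum>(r1,r2)\<leftarrow>R. \<Sum>(p',q')\<leftarrow>\<Delta>H r2. P (t2 * u2 * r1) a * (P (t1 * p') b * P (u1 * q') c)) =
          (\<Sum>(r1,r2)\<leftarrow>R. \<Sum>(s1,s2)\<leftarrow>R. P (t2 * u2 * (r1 * s1)) a * (P (t1 * s2) b * P (u1 * r2) c))"
      for t1 t2 u1 u2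
      by (rule R_coproduct_right_sum[where f = "\<lambda>x p' q'. P (t2 * u2 * x) a * (P (t1 * p') b * P (u1 * q') c)"])
        (intro paired_linear_intros)+
    then show ?thesis by simp
  qed
  finally show ?thesis .
qed

text \<open>The left-hand side is the pairing with c of Q applied to the first summand of the
  A-action on A.\<close>

lemma pairing_Q_mult:
  "(\<Sum>(t1,t2)\<leftarrow>R. \<Sum>(r1,r2)\<leftarrow>R. \<Sum>(a1,a2,a3)\<leftarrow>sw3 \<Delta>A a.
      (P (t1 * r2) b * P t2 a1 * P r1 a3) * P (Q a2) c) = P (Q a) (b * c)"
proof -
  have expand: "(\<Sum>(a1,a2,a3)\<leftarrow>sw3 \<Delta>A a. (P (t1 * r2) b * P t2 a1 * P r1 a3) * P (Q a2) c) =
        (\<Sum>(u1,u2)\<leftarrow>R. \<Sum>(v1,v2)\<leftarrow>R. P (t1 * r2) b * P (u1 * v2) c * P (t2 * ((u2 * v1) * r1)) a)"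
    for t1 t2 r1 r2
  proof -
    have "(\<Sum>(a1,a2,a3)\<leftarrow>sw3 \<Delta>A a. (P (t1 * r2) b * P t2 a1 * P r1 a3) * P (Q a2) c) =
          (\<Sum>(a1,a2,a3)\<leftarrow>sw3 \<Delta>A a. \<Sum>(u1,u2)\<leftarrow>R. \<Sum>(v1,v2)\<leftarrow>R.
             (P (t1 * r2) b * P t2 a1 * P r1 a3) * (P (u2 * v1) a2 * P (u1 * v2) c))"
      unfolding pairing_Q by (simp only: sum_list_split_const_mult[symmetric])
    also have "\<dots> = (\<Sum>(u1,u2)\<leftarrow>R. \<Sum>(v1,v2)\<leftarrow>R. \<Sum>(a1,a2,a3)\<leftarrow>sw3 \<Delta>A a.
                       (P (t1 * r2) b * P t2 a1 * P r1 a3) * (P (u2 * v1) a2 * P (u1 * v2) c))"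
      by (subst sum_list_split3_split_swap, subst sum_list_split3_split_swap, rule refl)
    also have "\<dots> = (\<Sum>(u1,u2)\<leftarrow>R. \<Sum>(v1,v2)\<leftarrow>R. P (t1 * r2) b * P (u1 * v2) c * P (t2 * ((u2 * v1) * r1)) a)"
      by (simp only: pairing_mult3[symmetric], simp only: sum_list_split3_const_mult[symmetric],
          simp only: mult_ac)
    finally show ?thesis .
  qed
  have reorder: "(\<Sum>(r1,r2)\<leftarrow>R. \<Sum>(u1,u2)\<leftarrow>R. \<Sum>(v1,v2)\<leftarrow>R. P (t1 * r2) b * P (u1 * v2) c * P (t2 * ((u2 * v1) * r1)) a) =
     (\<Sum>(u1,u2)\<leftarrow>R. \<Sum>(v1,v2)\<leftarrow>R. \<Sum>(r1,r2)\<leftarrow>R. P (t1 * r2) b * P (u1 * v2) c * P (t2 * ((u2 * v1) * r1)) a)"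
    for t1 t2
  proof -
    have "(\<Sum>(r1,r2)\<leftarrow>R. \<Sum>(v1,v2)\<leftarrow>R. P (t1 * r2) b * P (u1 * v2) c * P (t2 * ((u2 * v1) * r1)) a) =
          (\<Sum>(v1,v2)\<leftarrow>R. \<Sum>(r1,r2)\<leftarrow>R. P (t1 * r2) b * P (u1 * v2) c * P (t2 * ((u2 * v1) * r1)) a)" for u1 u2
      by (rule sum_list_split_swap)
    then show ?thesis by (subst sum_list_split_swap) simp
  qed
  show ?thesis
    unfolding pairing_Q_mult_expansion expand reorder by (simp add: mult_ac)
qed

lemma Q_actA:
  assumes linQ: "Vector_Spaces.linear sA sH Q"
  shows "Q (actA_A sH sA \<Delta>A P R b a) = actA_H sH \<Delta>H P b (Q a)"
proof -
  define T where "T = sum_list [sA (P (t1 * r2) b * P t2 a1 * P r1 a3) a2.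
                 (t1, t2) \<leftarrow> R, (r1, r2) \<leftarrow> R, (a1, a2, a3) \<leftarrow> sw3 \<Delta>A a]"
  have "Q T = (\<Sum>(p,q)\<leftarrow>\<Delta>H (Q a). sH (P p b) q)"
  proof (rule H_eq_by_pairing)
    fix c
    note g = linear_functional_pairing_Q[OF linQ, of c]
    have "P (Q T) c = (\<Sum>(t1,t2)\<leftarrow>R. \<Sum>(r1,r2)\<leftarrow>R. \<Sum>(a1,a2,a3)\<leftarrow>sw3 \<Delta>A a.
                         (P (t1 * r2) b * P t2 a1 * P r1 a3) * P (Q a2) c)"
      unfolding T_def
      by (simp add: linear_map_sum_list[OF g] linear_map_scale[OF g] sum_list_map_concat o_def split_def)
    also have "\<dots> = P (Q a) (b * c)" by (rule pairing_Q_mult)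
    also have "\<dots> = P (\<Sum>(p,q)\<leftarrow>\<Delta>H (Q a). sH (P p b) q) c"
      unfolding pairing_mult_right by (rule H.functional_sum_list_scale[symmetric]) (rule pairing_linear_left)
    finally show "P (Q T) c = P (\<Sum>(p,q)\<leftarrow>\<Delta>H (Q a). sH (P p b) q) c" .
  qed
  moreover have "actA_A sH sA \<Delta>A P R b a = T - sA (P (Q a) b) 1"
    unfolding actA_A_def T_def ..
  ultimately show ?thesis
    unfolding actA_H_def by (simp add: linear_map_diff[OF linQ] linear_map_scale[OF linQ] Q_one)
qed

lemma Q_actH:
  assumes linQ: "Vector_Spaces.linear sA sH Q"
  shows "Q (actH_A sA \<Delta>A SA P h a) = actH_H \<Delta>H SH h (Q a)"
proof (rule H_eq_by_pairing)
  fix c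
  note g = linear_functional_pairing_Q[OF linQ, of c]
  have M: "bilinear_form sH sH (\<lambda>x y. P x a * P y c)"
    by (intro H.bilinear_formI paired_linear_intros)
  have "P (Q (actH_A sA \<Delta>A SA P h a)) c =
        (\<Sum>(a1,a2,a3)\<leftarrow>sw3 \<Delta>A a. P h (SA a1 * a3) * P (Q a2) c)"
    unfolding actH_A_def by (simp add: linear_map_sum_list[OF g] o_def split_def linear_map_scale[OF g])
  also have "\<dots> = (\<Sum>(a1,a2,a3)\<leftarrow>sw3 \<Delta>A a. \<Sum>(t1,t2)\<leftarrow>R. \<Sum>(r1,r2)\<leftarrow>R.
                     P (t1 * r2) c * (P h (SA a1 * a3) * P (t2 * r1) a2))"
    unfolding pairing_Q by (simp only: sum_list_split_const_mult[symmetric]) (simp only: mult_ac)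
  also have "\<dots> = (\<Sum>(t1,t2)\<leftarrow>R. \<Sum>(r1,r2)\<leftarrow>R. P (t1 * r2) c *
                     (\<Sum>(a1,a2,a3)\<leftarrow>sw3 \<Delta>A a. P h (SA a1 * a3) * P (t2 * r1) a2))"
    by (subst sum_list_split3_split_swap, subst sum_list_split3_split_swap) simp
  also have "\<dots> = (\<Sum>(t1,t2)\<leftarrow>R. \<Sum>(r1,r2)\<leftarrow>R. P (t1 * r2) c *
                     (\<Sum>(h1,h2)\<leftarrow>\<Delta>H h. P (SH h1 * (t2 * r1 * h2)) a))"
    by (simp only: pairing_coadjoint)
  also have "\<dots> = (\<Sum>(h1,h2)\<leftarrow>\<Delta>H h. \<Sum>(t1,t2)\<leftarrow>R. \<Sum>(r1,r2)\<leftarrow>R.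
                     P (SH h1 * (t2 * r1 * h2)) a * P (t1 * r2) c)"
    by (simp only: sum_list_split_const_mult[symmetric], subst sum_list_split_swap,
        simp only: sum_list_split_swap[where ys = "\<Delta>H h"] mult.commute)
  also have "\<dots> = (\<Sum>(h1,h2)\<leftarrow>\<Delta>H h. \<Sum>(t1,t2)\<leftarrow>R. \<Sum>(r1,r2)\<leftarrow>R.
                     P (t2 * r1) a * P (h1 * (t1 * r2) * SH h2) c)"
    using H.centralises_coproduct_conjugation[OF R21R_centralises_coproduct M, of h]
    by (simp add: sum_list_tmul sum_list_flip mult.assoc)
  also have "\<dots> = (\<Sum>(h1,h2)\<leftarrow>\<Delta>H h. P (h1 * Q a * SH h2) c)"
  proof -
    have "P (h1 * Q a * SH h2) c =
          (\<Sum>(t1,t2)\<leftarrow>R. \<Sum>(r1,r2)\<leftarrow>R. P (t2 * r1) a * P (h1 * (t1 * r2) * SH h2) c)" for h1 h2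
      by (rule functional_Q) (intro paired_linear_intros)
    then show ?thesis by simp
  qed
  also have "\<dots> = P (actH_H \<Delta>H SH h (Q a)) c"
    unfolding actH_H_def by (simp add: linear_map_sum_list[OF pairing_linear_left] o_def split_def)
  finally show "P (Q (actH_A sA \<Delta>A SA P h a)) c = P (actH_H \<Delta>H SH h (Q a)) c" .
qed

end

theorem lemma4p1:
  fixes sH :: "complex \<Rightarrow> 'h::ring_1 \<Rightarrow> 'h" and \<Delta>H :: "'h \<Rightarrow> ('h \<times> 'h) list"
    and \<epsilon>H :: "'h \<Rightarrow> complex" and SH :: "'h \<Rightarrow> 'h"
    and sA :: "complex \<Rightarrow> 'a::ring_1 \<Rightarrow> 'a" and \<Delta>A :: "'a \<Rightarrow> ('a \<times> 'a) list"
    and \<epsilon>A :: "'a \<Rightarrow> complex" and SA :: "'a \<Rightarrow> 'a"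
    and pair :: "'h \<Rightarrow> 'a \<Rightarrow> complex" and R :: "('h \<times> 'h) list"
  assumes "hopf_algebra sH \<Delta>H \<epsilon>H SH"
    and "hopf_algebra sA \<Delta>A \<epsilon>A SA"
    and "hopf_pairing sH \<Delta>H \<epsilon>H SH sA \<Delta>A \<epsilon>A SA pair"
    and "nondegenerate_pairing pair"
    and "quasitriangular sH \<Delta>H R"
    and "Vector_Spaces.linear sA sH (Qmap sH pair R)"
    and "bij (Qmap sH pair R)"
  shows "bij_betw (Qmap sH pair R) {a. \<epsilon>A a = 0} {x. \<epsilon>H x = 0} \<and>
         (\<forall>h a. \<epsilon>A a = 0 \<longrightarrow>
            Qmap sH pair R (actH_A sA \<Delta>A SA pair h a) = actH_H \<Delta>H SH h (Qmap sH pair R a)) \<and>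
         (\<forall>b a. \<epsilon>A a = 0 \<longrightarrow>
            Qmap sH pair R (actA_A sH sA \<Delta>A pair R b a) = actA_H sH \<Delta>H pair b (Qmap sH pair R a)) \<and>
         (\<forall>W. double_subrep sH \<epsilon>H (actH_H \<Delta>H SH) (actA_H sH \<Delta>H pair) W \<longleftrightarrow>
            (\<exists>V. double_subrep sA \<epsilon>A (actH_A sA \<Delta>A SA pair) (actA_A sH sA \<Delta>A pair R) V \<and>
                 W = Qmap sH pair R ` V))"
proof -
  interpret paired_quasitriangular sH \<Delta>H \<epsilon>H SH sA \<Delta>A \<epsilon>A SA pair R
    using assms(1-5) by (intro paired_quasitriangular.intro hopf.intro paired_quasitriangular_axioms.intro)
  note actH = Q_actH[OF assms(6)] and actA = Q_actA[OF assms(6)]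
  have "bij_betw Q {a. \<epsilon>A a = 0} {x. \<epsilon>H x = 0}"
    by (rule bij_betw_kernels[OF assms(7)]) (rule counit_Q)
  moreover have "double_subrep sH \<epsilon>H (actH_H \<Delta>H SH) (actA_H sH \<Delta>H pair) W \<longleftrightarrow>
      (\<exists>V. double_subrep sA \<epsilon>A (actH_A sA \<Delta>A SA pair) (actA_A sH sA \<Delta>A pair R) V \<and> W = Q ` V)"
    for W
    by (rule double_subrep_transport[OF assms(6,7)]) (simp_all add: counit_Q actH actA)
  ultimately show ?thesis by (simp add: actH actA)
qed

end
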